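(* Let $H$ be a finite-dimensional complex Hilbert space and let $\mathcal{Pos}(H)$ be the set of positive operators on $H$ (linear $A\colon H\to H$ with $\langle Ax,x\rangle\geq 0$ for all $x\in H$). Then $\mathcal{Pos}(H)$ is a module over the semiring $\mathbb{R}_{\geq 0}$ of non-negative reals, and the map $$\mathrm{hs}_{\mathcal{Pos}}\colon\mathcal{Pos}(H)\longrightarrow\mathcal{Pos}(H)^{*}=\big(\mathcal{Pos}(H)\multimap\mathbb{R}_{\geq0}\big),\qquad \mathrm{hs}_{\mathcal{Pos}}(A)(B)=\mathrm{tr}(AB),$$ is a well-defined isomorphism in $\mathbf{Mod}_{\mathbb{R}_{\geq0}}$, natural in $H$ in the sense that for every linear map $C\colon H\to K$ between finite-dimensional Hilbert spaces, $\mathcal{Pos}(C)^{*}\circ\mathrm{hs}_{\mathcal{Pos},K}=\mathrm{hs}_{\mathcal{Pos},H}\circ\mathcal{Pos}(C^\dagger)$, where $\mathcal{Pos}(C)^*(f)=f\circ\mathcal{Pos}(C)$. Moreover, the functors $\mathcal{Pos}\colon\mathbf{FdHilb}\to\mathbf{Mod}_{\mathbb{R}_{\geq0}}$ and $\mathcal{Pos}\colon\mathbf{FdHilb}^{\mathrm{op}}\to\mathbf{Mod}_{\mathbb{R}_{\geq0}}^{\mathrm{op}}$ together with these isomorphisms form a map of adjunctions (in the sense of Mac Lane, IV.7, with functor squares commuting up to the isomorphisms $\mathrm{hs}_{\mathcal{Pos}}$) from the adjunction $(-)^{\dagger}\dashv(-)^{\dagger}$ between $\mathbf{FdHilb}$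 and $\mathbf{FdHilb}^{\mathrm{op}}$ to the adjunction $((-)\multimap\mathbb{R}_{\geq0})\dashv((-)\multimap\mathbb{R}_{\geq0})$ between $\mathbf{Mod}_{\mathbb{R}_{\geq0}}$ and $\mathbf{Mod}_{\mathbb{R}_{\geq0}}^{\mathrm{op}}$.
   Context: A module over a commutative semiring $S$ is a commutative monoid with a scalar multiplication $S\times M\to M$ that is additive in each argument, satisfies $1\bullet x=x$ and $(st)\bullet x=s\bullet(t\bullet x)$; $\mathbf{Mod}_S$ is the category of $S$-modules and $S$-linear maps, and $M\multimap N$ is the $S$-module of linear maps $M\to N$. The functor $(-)\multimap\mathbb{R}_{\geq0}\colon\mathbf{Mod}_{\mathbb{R}_{\geq0}}\to\mathbf{Mod}_{\mathbb{R}_{\geq0}}^{\mathrm{op}}$ (precomposition on maps) is adjoint to itself via swapping arguments. $\mathbf{FdHilb}$ is the category of finite-dimensional complex Hilbert spaces and linear maps; $C^\dagger$ is the adjoint of $C$; $(-)^\dagger\colon\mathbf{FdHilb}\to\mathbf{FdHilb}^{\mathrm{op}}$ is identity on objects, $C\mapsto C^\dagger$ on maps, and is self-adjoint. The functor $\mathcal{Pos}$ sends $C\colon H\to K$ to $\mathcal{Pos}(C)(A)=CAC^{\dagger}$. $\mathrm{tr}$ is the trace. *)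

theory Defs
  imports "Jordan_Normal_Form.Schur_Decomposition"
begin

text \<open>Finite-dimensional complex Hilbert spaces are modelled (up to unitary isomorphism)
  as the spaces C^n with the standard inner product; linear maps C^n -> C^m are
  complex m x n matrices; the adjoint is the conjugate transpose (mat_adjoint).\<close>

definition hinner :: "complex vec \<Rightarrow> complex vec \<Rightarrow> complex" where
  "hinner u v = (\<Sum>i<dim_vec v. u $ i * cnj (v $ i))"

definition mtrace :: "complex mat \<Rightarrow> complex" where
  "mtrace A = (\<Sum>i<dim_row A. A $$ (i, i))"

definition Pos :: "nat \<Rightarrow> complex mat set" where
  "Pos n = {A \<in> carrier_mat n n. \<forall>x \<in> carrier_vec n.
             Im (hinner (A *\<^sub>v x) x) = 0 \<and> 0 \<le> Re (hinner (A *\<^sub>v x) x)}"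

definition rsmult :: "real \<Rightarrow> complex mat \<Rightarrow> complex mat" where
  "rsmult r A = complex_of_real r \<cdot>\<^sub>m A"

text \<open>The dual module Pos(n) -o R>=0: R>=0-linear maps Pos(n) -> R>=0, represented
  extensionally (value 0 outside Pos n).\<close>
definition Pos_dual :: "nat \<Rightarrow> (complex mat \<Rightarrow> real) set" where
  "Pos_dual n = {f. (\<forall>A \<in> Pos n. 0 \<le> f A)
     \<and> (\<forall>A \<in> Pos n. \<forall>B \<in> Pos n. f (A + B) = f A + f B)
     \<and> (\<forall>r \<ge> 0. \<forall>A \<in> Pos n. f (rsmult r A) = r * f A)
     \<and> (\<forall>A. A \<notin> Pos n \<longrightarrow> f A = 0)}"

text \<open>hs_Pos(A)(B) = tr(AB) (the trace is shown to be real, see the theorem).\<close>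
definition hs :: "nat \<Rightarrow> complex mat \<Rightarrow> complex mat \<Rightarrow> real" where
  "hs n A = (\<lambda>B. if B \<in> Pos n then Re (mtrace (A * B)) else 0)"

definition PosMap :: "complex mat \<Rightarrow> complex mat \<Rightarrow> complex mat" where
  "PosMap C A = C * A * mat_adjoint C"

definition dualmap :: "nat \<Rightarrow> (complex mat \<Rightarrow> 'b) \<Rightarrow> ('b \<Rightarrow> real)
                         \<Rightarrow> complex mat \<Rightarrow> real" where
  "dualmap n g f = (\<lambda>B. if B \<in> Pos n then f (g B) else 0)"

definition ev :: "nat \<Rightarrow> complex mat \<Rightarrow> (complex mat \<Rightarrow> real) \<Rightarrow> real" where
  "ev n A = (\<lambda>f. if f \<in> Pos_dual n then f A else 0)"

end

theory Submission
  imports Defs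
begin

text \<open>Positive matrices are Hermitian, and peeling off one column at a time (Cholesky
  elimination) writes every positive matrix as a finite sum of rank-one matrices \<open>c c\<^sup>\<dagger>\<close>.
  Since \<open>tr (A c c\<^sup>\<dagger>) = \<langle>A c, c\<rangle>\<close>, the trace \<open>tr (A B)\<close> of two positive matrices is a
  non-negative real, and \<open>hs A\<close> determines the quadratic form of \<open>A\<close>, hence \<open>A\<close> itself
  (polarization). Conversely, every Hermitian matrix is a real linear combination of the
  matrices \<open>c c\<^sup>\<dagger>\<close> for \<open>c = e\<^sub>i, e\<^sub>i + e\<^sub>j, e\<^sub>i + \<i> e\<^sub>j\<close>, so an additive, positively
  homogeneous functional on the positive cone is determined by its values on these; the
  polarization identities turn those values into a positive matrix representing the
  functional. Naturality and the compatibility with the units are cyclicity of the trace.\<close>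

section \<open>Quadratic forms and Hermitian matrices\<close>

text \<open>Vectors are given by coordinate functions, so that no carrier conditions arise.\<close>

definition qform :: "nat \<Rightarrow> complex mat \<Rightarrow> (nat \<Rightarrow> complex) \<Rightarrow> complex" where
  "qform n A x = (\<Sum>i<n. \<Sum>j<n. A $$ (i,j) * x j * cnj (x i))"

definition evec :: "nat \<Rightarrow> nat \<Rightarrow> complex" where
  "evec i = (\<lambda>l. if l = i then 1 else 0)"

definition uvec :: "nat \<Rightarrow> nat \<Rightarrow> nat \<Rightarrow> complex" where
  "uvec i j = (\<lambda>l. evec i l + evec j l)"

definition vvec :: "nat \<Rightarrow> nat \<Rightarrow> nat \<Rightarrow> complex" where
  "vvec i j = (\<lambda>l. evec i l + \<i> * evec j l)"

definition hermitian :: "nat \<Rightarrow> complex mat \<Rightarrow> bool" where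
  "hermitian n A \<longleftrightarrow> (\<forall>i<n. \<forall>j<n. A $$ (j,i) = cnj (A $$ (i,j)))"

lemma sum_if_const_cond: "(\<Sum>j\<in>S. if P then f j else 0) = (if P then sum f S else 0)"
  by simp

lemma hinner_mult_mat_vec_eq_qform:
  assumes "A \<in> carrier_mat n n"
  shows "hinner (A *\<^sub>v vec n x) (vec n x) = qform n A x"
  using assms unfolding hinner_def qform_def
  by (auto simp: mult_mat_vec_def scalar_prod_def atLeast0LessThan sum_distrib_left
      mult.commute mult.left_commute)

lemma Pos_iff_qform:
  "A \<in> Pos n \<longleftrightarrow> A \<in> carrier_mat n n \<and> (\<forall>x. Im (qform n A x) = 0 \<and> 0 \<le> Re (qform n A x))"
proof
  assume A: "A \<in> Pos n"
  then have A_carrier: "A \<in> carrier_mat n n" by (simp add: Pos_def)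
  have "Im (qform n A x) = 0 \<and> 0 \<le> Re (qform n A x)" for x
  proof -
    have "vec n x \<in> carrier_vec n" by simp
    with A show ?thesis unfolding Pos_def hinner_mult_mat_vec_eq_qform[OF A_carrier, symmetric] by blast
  qed
  with A_carrier show "A \<in> carrier_mat n n \<and> (\<forall>x. Im (qform n A x) = 0 \<and> 0 \<le> Re (qform n A x))"
    by blast
next
  assume A: "A \<in> carrier_mat n n \<and> (\<forall>x. Im (qform n A x) = 0 \<and> 0 \<le> Re (qform n A x))"
  have "hinner (A *\<^sub>v v) v = qform n A (\<lambda>i. v $ i)" if "v \<in> carrier_vec n" for v
  proof -
    from that have "v = vec n (\<lambda>i. v $ i)" by auto
    then show ?thesis using hinner_mult_mat_vec_eq_qform[of A n] A by metis
  qed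
  with A show "A \<in> Pos n" unfolding Pos_def by auto
qed

lemma Pos_carrier: "A \<in> Pos n \<Longrightarrow> A \<in> carrier_mat n n"
  by (simp add: Pos_def)

lemma Pos_qform_real: "A \<in> Pos n \<Longrightarrow> Im (qform n A x) = 0"
  by (simp add: Pos_iff_qform)

lemma Pos_qform_nonneg: "A \<in> Pos n \<Longrightarrow> 0 \<le> Re (qform n A x)"
  by (simp add: Pos_iff_qform)

lemma qform_add:
  assumes "A \<in> carrier_mat n n" "B \<in> carrier_mat n n"
  shows "qform n (A + B) x = qform n A x + qform n B x"
proof -
  have "qform n (A + B) x
      = (\<Sum>i<n. \<Sum>j<n. A $$ (i,j) * x j * cnj (x i) + B $$ (i,j) * x j * cnj (x i))"
    using assms by (auto simp: qform_def algebra_simps intro!: sum.cong)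
  then show ?thesis by (simp add: qform_def sum.distrib)
qed

lemma qform_smult:
  assumes "A \<in> carrier_mat n n"
  shows "qform n (c \<cdot>\<^sub>m A) x = c * qform n A x"
  using assms by (auto simp: qform_def algebra_simps sum_distrib_left intro!: sum.cong)

lemma sum_mult_evec:
  assumes "i < n"
  shows "(\<Sum>l<n. f l * evec i l) = f i" and "(\<Sum>l<n. f l * cnj (evec i l)) = f i"
proof -
  have "(\<lambda>l. f l * evec i l) = (\<lambda>l. if l = i then f l else 0)"
    and "(\<lambda>l. f l * cnj (evec i l)) = (\<lambda>l. if l = i then f l else 0)"
    by (auto simp: evec_def)
  then show "(\<Sum>l<n. f l * evec i l) = f i" and "(\<Sum>l<n. f l * cnj (evec i l)) = f i"
    using assms by (simp_all only: sum.delta finite_lessThan lessThan_iff if_True)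
qed

lemma qform_evec:
  assumes "i < n"
  shows "qform n A (evec i) = A $$ (i,i)"
proof -
  have "qform n A (evec i) = (\<Sum>l<n. (\<Sum>j<n. A $$ (l,j) * evec i j) * cnj (evec i l))"
    unfolding qform_def by (simp add: sum_distrib_right)
  also have "\<dots> = A $$ (i,i)" using assms by (simp add: sum_mult_evec)
  finally show ?thesis .
qed

lemma qform_sub_evec:
  assumes k: "k < n"
  shows "qform n A (\<lambda>l. x l - t * evec k l) = qform n A x - cnj t * (\<Sum>j<n. A $$ (k,j) * x j)
     - t * (\<Sum>i<n. A $$ (i,k) * cnj (x i)) + t * cnj t * A $$ (k,k)"
proof -
  have "qform n A (\<lambda>l. x l - t * evec k l) = (\<Sum>i<n. \<Sum>j<n. A $$ (i,j) * x j * cnj (x i)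
     - (if i = k then cnj t * (A $$ (i,j) * x j) else 0)
     - (if j = k then t * (A $$ (i,j) * cnj (x i)) else 0)
     + (if i = k then (if j = k then t * cnj t * A $$ (i,j) else 0) else 0))"
    by (auto simp: qform_def evec_def algebra_simps intro!: sum.cong)
  also have "\<dots> = qform n A x - cnj t * (\<Sum>j<n. A $$ (k,j) * x j)
     - t * (\<Sum>i<n. A $$ (i,k) * cnj (x i)) + t * cnj t * A $$ (k,k)"
    using k by (simp add: qform_def sum.distrib sum_subtractf sum_distrib_left sum_if_const_cond)
  finally show ?thesis .
qed

lemma qform_evec_sub_evec:
  assumes i: "i < n" and j: "j < n"
  shows "qform n A (\<lambda>l. evec i l - t * evec j l)
    = A $$ (i,i) - cnj t * A $$ (j,i) - t * A $$ (i,j) + t * cnj t * A $$ (j,j)"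
proof -
  show ?thesis using qform_sub_evec[OF j, of A "evec i" t] qform_evec[OF i] sum_mult_evec[OF i] by simp
qed

lemma qform_uvec:
  "i < n \<Longrightarrow> j < n \<Longrightarrow> qform n A (uvec i j) = A $$ (i,i) + A $$ (j,i) + A $$ (i,j) + A $$ (j,j)"
  using qform_evec_sub_evec[of i n j A "-1"] by (simp add: uvec_def)

lemma qform_vvec:
  "i < n \<Longrightarrow> j < n \<Longrightarrow>
    qform n A (vvec i j) = A $$ (i,i) - \<i> * A $$ (j,i) + \<i> * A $$ (i,j) + A $$ (j,j)"
  using qform_evec_sub_evec[of i n j A "-\<i>"] by (simp add: vvec_def)

lemma Pos_hermitian: "A \<in> Pos n \<Longrightarrow> hermitian n A"
  unfolding hermitian_def
proof (intro allI impI)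
  fix i j assume A: "A \<in> Pos n" and i: "i < n" and j: "j < n"
  have "Im (A $$ (k,k)) = 0" if "k < n" for k
    using Pos_qform_real[OF A, of "evec k"] qform_evec[OF that] by simp
  with i j have "Im (A $$ (j,i) + A $$ (i,j)) = 0" and "Re (A $$ (j,i) - A $$ (i,j)) = 0"
    using Pos_qform_real[OF A, of "uvec i j"] Pos_qform_real[OF A, of "vvec i j"]
      qform_uvec[OF i j, of A] qform_vvec[OF i j, of A] by simp_all
  then show "A $$ (j,i) = cnj (A $$ (i,j))" by (simp add: complex_eq_iff)
qed

lemma hermitianD: "hermitian n A \<Longrightarrow> i < n \<Longrightarrow> j < n \<Longrightarrow> A $$ (j,i) = cnj (A $$ (i,j))"
  unfolding hermitian_def by blast

lemma hermitian_diag_real: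
  assumes "hermitian n A" and "i < n"
  shows "A $$ (i,i) = complex_of_real (Re (A $$ (i,i)))"
proof -
  have "A $$ (i,i) = cnj (A $$ (i,i))" using hermitianD[OF assms(1,2,2)] .
  from arg_cong[OF this, of Im] have "Im (A $$ (i,i)) = 0" by simp
  then show ?thesis by (simp add: complex_eq_iff)
qed

lemma hermitian_qform_real:
  assumes "hermitian n A"
  shows "Im (qform n A x) = 0"
proof -
  have "cnj (qform n A x) = (\<Sum>i<n. \<Sum>j<n. A $$ (j,i) * x i * cnj (x j))"
    unfolding qform_def cnj_sum
  proof (intro sum.cong refl)
    fix i j assume "i \<in> {..<n}" "j \<in> {..<n}"
    then have "A $$ (j,i) = cnj (A $$ (i,j))" by (intro hermitianD[OF assms]) auto
    then show "cnj (A $$ (i,j) * x j * cnj (x i)) = A $$ (j,i) * x i * cnj (x j)" by simp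
  qed
  also have "\<dots> = qform n A x" unfolding qform_def by (rule sum.swap)
  finally have "cnj (qform n A x) = qform n A x" .
  from arg_cong[OF this, of Im] show ?thesis by simp
qed

lemma mat_eq_if_qform_eq:
  assumes A: "A \<in> carrier_mat n n" and B: "B \<in> carrier_mat n n"
    and eq: "\<And>c. qform n A c = qform n B c"
  shows "A = B"
proof (rule eq_matI)
  show "dim_row A = dim_row B" "dim_col A = dim_col B" using A B by auto
  fix i j assume "i < dim_row B" "j < dim_col B"
  then have i: "i < n" and j: "j < n" using B by auto
  have diag: "A $$ (k,k) = B $$ (k,k)" if "k < n" for k
    using eq[of "evec k"] qform_evec[OF that] by metis
  have "A $$ (j,i) + A $$ (i,j) = B $$ (j,i) + B $$ (i,j)"
    using eq[of "uvec i j"] qform_uvec[OF i j] diag[OF i] diag[OF j] by simp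
  moreover have "\<i> * (A $$ (i,j) - A $$ (j,i)) = \<i> * (B $$ (i,j) - B $$ (j,i))"
    using eq[of "vvec i j"] qform_vvec[OF i j] diag[OF i] diag[OF j] by (simp add: algebra_simps)
  ultimately show "A $$ (i,j) = B $$ (i,j)" by (auto simp: complex_eq_iff)
qed

section \<open>Traces and rank-one matrices\<close>

lemma mtrace_mult:
  assumes "A \<in> carrier_mat a b" "B \<in> carrier_mat b a"
  shows "mtrace (A * B) = (\<Sum>i<a. \<Sum>j<b. A $$ (i,j) * B $$ (j,i))"
  using assms unfolding mtrace_def
  by (auto simp: scalar_prod_def atLeast0LessThan intro!: sum.cong)

lemma mtrace_mult_comm:
  assumes "A \<in> carrier_mat a b" "B \<in> carrier_mat b a"
  shows "mtrace (A * B) = mtrace (B * A)"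
  unfolding mtrace_mult[OF assms] mtrace_mult[OF assms(2,1)]
  by (subst sum.swap) (simp add: mult.commute)

lemma mtrace_mult_add_right:
  assumes A: "A \<in> carrier_mat a b" and B: "B \<in> carrier_mat b a" and C: "C \<in> carrier_mat b a"
  shows "mtrace (A * (B + C)) = mtrace (A * B) + mtrace (A * C)"
proof -
  have BC: "B + C \<in> carrier_mat b a" using B C by simp
  show ?thesis unfolding mtrace_mult[OF A BC] mtrace_mult[OF A B] mtrace_mult[OF A C]
    using B C by (simp add: sum.distrib algebra_simps)
qed

lemma mtrace_mult_smult_right:
  assumes A: "A \<in> carrier_mat a b" and B: "B \<in> carrier_mat b a"
  shows "mtrace (A * (c \<cdot>\<^sub>m B)) = c * mtrace (A * B)"
proof -
  have cB: "c \<cdot>\<^sub>m B \<in> carrier_mat b a" using B by simp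
  show ?thesis unfolding mtrace_mult[OF A cB] mtrace_mult[OF A B]
    using B by (simp add: sum_distrib_left algebra_simps)
qed

lemma hermitian_mtrace_mult_real:
  assumes A: "A \<in> carrier_mat n n" "hermitian n A" and B: "B \<in> carrier_mat n n" "hermitian n B"
  shows "Im (mtrace (A * B)) = 0"
proof -
  have "cnj (mtrace (A * B)) = (\<Sum>i<n. \<Sum>j<n. A $$ (j,i) * B $$ (i,j))"
    unfolding mtrace_mult[OF A(1) B(1)] cnj_sum
  proof (intro sum.cong refl)
    fix i j assume "i \<in> {..<n}" "j \<in> {..<n}"
    then have "A $$ (j,i) = cnj (A $$ (i,j))" and "B $$ (i,j) = cnj (B $$ (j,i))"
      by (auto intro: hermitianD[OF A(2)] hermitianD[OF B(2)])
    then show "cnj (A $$ (i,j) * B $$ (j,i)) = A $$ (j,i) * B $$ (i,j)" by simp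
  qed
  also have "\<dots> = mtrace (A * B)" unfolding mtrace_mult[OF A(1) B(1)] by (rule sum.swap)
  finally have "cnj (mtrace (A * B)) = mtrace (A * B)" .
  from arg_cong[OF this, of Im] show ?thesis by simp
qed

definition outer :: "nat \<Rightarrow> (nat \<Rightarrow> complex) \<Rightarrow> complex mat" where
  "outer n c = mat n n (\<lambda>(i,j). c i * cnj (c j))"

lemma outer_carrier [simp]: "outer n c \<in> carrier_mat n n"
  by (simp add: outer_def)

lemma dim_outer [simp]: "dim_row (outer n c) = n" "dim_col (outer n c) = n"
  by (simp_all add: outer_def)

lemma outer_index [simp]: "i < n \<Longrightarrow> j < n \<Longrightarrow> outer n c $$ (i,j) = c i * cnj (c j)"
  by (simp add: outer_def)

lemma mtrace_mult_outer: "A \<in> carrier_mat n n \<Longrightarrow> mtrace (A * outer n c) = qform n A c"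
  by (auto simp: mtrace_mult qform_def intro!: sum.cong)

lemma qform_outer:
  "qform n (outer n c) x = (\<Sum>i<n. c i * cnj (x i)) * cnj (\<Sum>i<n. c i * cnj (x i))"
  unfolding qform_def sum_product cnj_sum by (auto simp: mult_ac intro!: sum.cong)

lemma outer_in_Pos: "outer n c \<in> Pos n"
  unfolding Pos_iff_qform qform_outer complex_mult_cnj by simp

lemma zero_in_Pos: "0\<^sub>m n n \<in> Pos n"
  unfolding Pos_iff_qform by (simp add: qform_def)

lemma add_in_Pos: "A \<in> Pos n \<Longrightarrow> B \<in> Pos n \<Longrightarrow> A + B \<in> Pos n"
  unfolding Pos_iff_qform by (simp add: qform_add)

lemma rsmult_in_Pos: "0 \<le> r \<Longrightarrow> A \<in> Pos n \<Longrightarrow> rsmult r A \<in> Pos n"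
  unfolding Pos_iff_qform rsmult_def by (simp add: qform_smult)

lemma Pos_diag_nonneg: "A \<in> Pos n \<Longrightarrow> k < n \<Longrightarrow> 0 \<le> Re (A $$ (k,k))"
  using Pos_qform_nonneg[of A n "evec k"] by (simp add: qform_evec)

lemma nonneg_quadratic_coeff_bound:
  fixes q W b :: real
  assumes h: "\<And>r. 0 \<le> q - 2 * r * W + r\<^sup>2 * W * b" and W: "0 \<le> W" and b: "0 \<le> b"
  shows "W \<le> b * q"
proof (cases "b > 0")
  case True
  have "0 \<le> q - 2 * (1/b) * W + (1/b)\<^sup>2 * W * b" by (rule h)
  also have "\<dots> = q - W / b" using True by (simp add: power2_eq_square field_simps)
  finally show ?thesis using True by (simp add: field_simps)
next
  case False
  with b have b0: "b = 0" by simp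
  show ?thesis
  proof (rule ccontr)
    assume "\<not> W \<le> b * q"
    with b0 have W_pos: "W > 0" by simp
    have "0 \<le> q - 2 * ((q + 1) / (2 * W)) * W + ((q + 1) / (2 * W))\<^sup>2 * W * b" by (rule h)
    also have "\<dots> = -1" using W_pos b0 by (simp add: field_simps)
    finally show False by simp
  qed
qed

text \<open>Cauchy--Schwarz for the semi-inner product \<open>\<langle>B x, y\<rangle>\<close>, with \<open>y = e\<^sub>k\<close>; it follows from
  positivity of \<open>\<langle>B (x - t e\<^sub>k), x - t e\<^sub>k\<rangle>\<close> for real multiples \<open>t\<close> of the right phase.\<close>

lemma Pos_Cauchy_Schwarz:
  assumes B: "B \<in> Pos n" and k: "k < n"
  shows "(cmod (\<Sum>i<n. B $$ (i,k) * cnj (x i)))\<^sup>2 \<le> Re (B $$ (k,k)) * Re (qform n B x)"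
proof -
  define w where "w = (\<Sum>i<n. B $$ (i,k) * cnj (x i))"
  define W where "W = (cmod w)\<^sup>2"
  have ww: "w * cnj w = complex_of_real W" unfolding W_def using complex_norm_square[of w] by simp
  have row_k: "(\<Sum>j<n. B $$ (k,j) * x j) = cnj w"
    unfolding w_def cnj_sum
  proof (intro sum.cong refl)
    fix j assume "j \<in> {..<n}"
    then have "B $$ (k,j) = cnj (B $$ (j,k))" using hermitianD[OF Pos_hermitian[OF B], of j k] k by simp
    then show "B $$ (k,j) * x j = cnj (B $$ (j,k) * cnj (x j))" by simp
  qed
  have Bkk: "B $$ (k,k) = complex_of_real (Re (B $$ (k,k)))"
    using hermitian_diag_real[OF Pos_hermitian[OF B] k] .
  have "0 \<le> Re (qform n B x) - 2 * r * W + r\<^sup>2 * W * Re (B $$ (k,k))" for r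
  proof -
    let ?t = "complex_of_real r * cnj w"
    have "qform n B (\<lambda>l. x l - ?t * evec k l)
        = qform n B x - cnj ?t * cnj w - ?t * w + ?t * cnj ?t * B $$ (k,k)"
      using qform_sub_evec[OF k, of B x ?t] row_k unfolding w_def by simp
    also have "\<dots> = qform n B x - complex_of_real (2 * r * W)
        + complex_of_real (r\<^sup>2 * W * Re (B $$ (k,k)))"
      by (subst Bkk) (simp add: algebra_simps power2_eq_square ww[symmetric])
    finally show ?thesis using Pos_qform_nonneg[OF B, of "\<lambda>l. x l - ?t * evec k l"] by simp
  qed
  then have "W \<le> Re (B $$ (k,k)) * Re (qform n B x)"
    using Pos_diag_nonneg[OF B k] by (intro nonneg_quadratic_coeff_bound) (auto simp: W_def)
  then show ?thesis unfolding W_def w_def .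
qed

section \<open>Rank-one decomposition of positive matrices\<close>

definition in_leading_block :: "nat \<Rightarrow> nat \<Rightarrow> complex mat \<Rightarrow> bool" where
  "in_leading_block n k B \<longleftrightarrow> (\<forall>i<n. \<forall>j<n. k \<le> i \<or> k \<le> j \<longrightarrow> B $$ (i,j) = 0)"

lemma in_leading_block_0:
  assumes "B \<in> carrier_mat n n" and "in_leading_block n 0 B"
  shows "B = 0\<^sub>m n n"
  using assms by (intro eq_matI) (auto simp: in_leading_block_def)

lemma Pos_zero_diag_column:
  assumes B: "B \<in> Pos n" and k: "k < n" and Bkk: "Re (B $$ (k,k)) = 0" and i: "i < n"
  shows "B $$ (i,k) = 0" and "B $$ (k,i) = 0"
proof -
  have "(cmod (\<Sum>l<n. B $$ (l,k) * cnj (evec i l)))\<^sup>2 \<le> Re (B $$ (k,k)) * Re (qform n B (evec i))"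
    by (rule Pos_Cauchy_Schwarz[OF B k])
  then show "B $$ (i,k) = 0" using Bkk by (simp add: sum_mult_evec[OF i])
  then show "B $$ (k,i) = 0" using hermitianD[OF Pos_hermitian[OF B] i k] by simp
qed

text \<open>One step of Cholesky elimination: subtracting the rank-one matrix built from column \<open>k\<close>
  clears row and column \<open>k\<close>; its positivity is the Cauchy--Schwarz inequality above.\<close>

definition schur_complement :: "nat \<Rightarrow> nat \<Rightarrow> complex mat \<Rightarrow> complex mat" where
  "schur_complement n k B = B - rsmult (1 / Re (B $$ (k,k))) (outer n (\<lambda>l. B $$ (l,k)))"

lemma schur_complement_in_Pos:
  assumes B: "B \<in> Pos n" and k: "k < n" and Bkk: "0 < Re (B $$ (k,k))"
  shows "schur_complement n k B \<in> Pos n"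
  unfolding Pos_iff_qform
proof (intro conjI allI)
  have B_carrier: "B \<in> carrier_mat n n" using B by (rule Pos_carrier)
  then show S_carrier: "schur_complement n k B \<in> carrier_mat n n"
    by (simp add: schur_complement_def rsmult_def minus_carrier_mat)
  fix x
  define w where "w = (\<Sum>i<n. B $$ (i,k) * cnj (x i))"
  have "qform n (schur_complement n k B) x
      = qform n B x - complex_of_real (1 / Re (B $$ (k,k))) * (w * cnj w)"
  proof -
    have "schur_complement n k B + rsmult (1 / Re (B $$ (k,k))) (outer n (\<lambda>l. B $$ (l,k))) = B"
      using B_carrier by (intro eq_matI) (auto simp: schur_complement_def rsmult_def)
    then have "qform n B x = qform n (schur_complement n k B) x
        + complex_of_real (1 / Re (B $$ (k,k))) * qform n (outer n (\<lambda>l. B $$ (l,k))) x"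
      using S_carrier by (metis qform_add qform_smult outer_carrier rsmult_def smult_carrier_mat)
    then show ?thesis unfolding w_def qform_outer by simp
  qed
  also have "\<dots> = qform n B x - complex_of_real ((cmod w)\<^sup>2 / Re (B $$ (k,k)))"
    using complex_norm_square[of w] by simp
  finally have S_qform: "qform n (schur_complement n k B) x
      = qform n B x - complex_of_real ((cmod w)\<^sup>2 / Re (B $$ (k,k)))" .
  have "(cmod w)\<^sup>2 \<le> Re (B $$ (k,k)) * Re (qform n B x)"
    unfolding w_def by (rule Pos_Cauchy_Schwarz[OF B k])
  with Bkk have "(cmod w)\<^sup>2 / Re (B $$ (k,k)) \<le> Re (qform n B x)"
    by (simp add: field_simps)
  then show "Im (qform n (schur_complement n k B) x) = 0"
    and "0 \<le> Re (qform n (schur_complement n k B) x)"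
    using S_qform Pos_qform_real[OF B, of x] by simp_all
qed

lemma schur_complement_in_leading_block:
  assumes B: "B \<in> Pos n" and k: "k < n" and Bkk: "0 < Re (B $$ (k,k))"
    and block: "in_leading_block n (Suc k) B"
  shows "in_leading_block n k (schur_complement n k B)"
  unfolding in_leading_block_def
proof (intro allI impI)
  fix i j assume ij: "i < n" "j < n" "k \<le> i \<or> k \<le> j"
  have B_carrier: "B \<in> carrier_mat n n" using B by (rule Pos_carrier)
  have herm: "hermitian n B" using B by (rule Pos_hermitian)
  define \<beta> where "\<beta> = Re (B $$ (k,k))"
  have Bkk_eq: "B $$ (k,k) = complex_of_real \<beta>"
    unfolding \<beta>_def using hermitian_diag_real[OF herm k] .
  have Bkk_nz: "complex_of_real \<beta> \<noteq> 0" using Bkk unfolding \<beta>_def by simp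
  have entry: "schur_complement n k B $$ (i,j)
      = B $$ (i,j) - B $$ (i,k) * cnj (B $$ (j,k)) / complex_of_real \<beta>"
    using ij B_carrier unfolding \<beta>_def
    by (simp add: schur_complement_def rsmult_def divide_inverse)
  have zero: "B $$ (p,q) = 0" if "p < n" "q < n" "Suc k \<le> p \<or> Suc k \<le> q" for p q
    using block that unfolding in_leading_block_def by blast
  consider "i = k" | "j = k" | "Suc k \<le> i" | "Suc k \<le> j" using ij by linarith
  then show "schur_complement n k B $$ (i,j) = 0"
  proof cases
    case 1
    with entry Bkk_eq Bkk_nz hermitianD[OF herm ij(2) k] show ?thesis by simp
  next
    case 2
    with entry Bkk_eq Bkk_nz show ?thesis by simp
  next
    case 3
    with entry zero[of i j] zero[of i k] ij k show ?thesis by simp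
  next
    case 4
    with entry zero[of i j] zero[of j k] ij k show ?thesis by simp
  qed
qed

lemma Pos_peel_column:
  assumes B: "B \<in> Pos n" and k: "k < n" and block: "in_leading_block n (Suc k) B"
  obtains B' r c where "B' \<in> Pos n" "in_leading_block n k B'" "0 \<le> r"
    "B = B' + rsmult r (outer n c)"
proof (cases "Re (B $$ (k,k)) = 0")
  case True
  have "in_leading_block n k B"
    unfolding in_leading_block_def
  proof (intro allI impI)
    fix i j assume ij: "i < n" "j < n" "k \<le> i \<or> k \<le> j"
    then consider "i = k" | "j = k" | "Suc k \<le> i \<or> Suc k \<le> j" by linarith
    then show "B $$ (i,j) = 0"
      using Pos_zero_diag_column[OF B k True] block ij unfolding in_leading_block_def by cases auto
  qed
  moreover have "B = B + rsmult 0 (outer n c)" for c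
    using Pos_carrier[OF B] by (intro eq_matI) (auto simp: rsmult_def)
  ultimately show ?thesis using that[of B 0] B by blast
next
  case False
  then have Bkk: "0 < Re (B $$ (k,k))" using Pos_diag_nonneg[OF B k] by simp
  have "B = schur_complement n k B + rsmult (1 / Re (B $$ (k,k))) (outer n (\<lambda>l. B $$ (l,k)))"
    using Pos_carrier[OF B] by (intro eq_matI) (auto simp: schur_complement_def rsmult_def)
  with Bkk show ?thesis
    by (intro that[OF schur_complement_in_Pos[OF B k Bkk]
          schur_complement_in_leading_block[OF B k Bkk block]]) simp_all
qed

lemma Pos_induct [consumes 1, case_names zero add_outer]:
  assumes "B \<in> Pos n"
    and zero: "P (0\<^sub>m n n)"
    and add_outer: "\<And>B c r. B \<in> Pos n \<Longrightarrow> P B \<Longrightarrow> 0 \<le> r \<Longrightarrow> P (B + rsmult r (outer n c))"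
  shows "P B"
proof -
  have "P B" if "B \<in> Pos n" "in_leading_block n k B" for k B
    using that
  proof (induction k arbitrary: B)
    case 0
    then show ?case using zero in_leading_block_0 Pos_carrier by metis
  next
    case (Suc k)
    show ?case
    proof (cases "k < n")
      case True
      with Suc.prems obtain B' r c where "B' \<in> Pos n" "in_leading_block n k B'" "0 \<le> r"
        "B = B' + rsmult r (outer n c)" by (metis Pos_peel_column)
      with Suc.IH show ?thesis by (simp add: add_outer)
    next
      case False
      with Suc show ?thesis by (auto simp: in_leading_block_def)
    qed
  qed
  moreover have "in_leading_block n n B" by (simp add: in_leading_block_def)
  ultimately show ?thesis using assms(1) by blast
qed

lemma mtrace_Pos_nonneg:
  assumes A: "A \<in> Pos n" and B: "B \<in> Pos n"
  shows "0 \<le> Re (mtrace (A * B))"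
  using B
proof (induction rule: Pos_induct)
  case zero
  show ?case by (simp add: mtrace_mult[OF Pos_carrier[OF A] zero_carrier_mat])
next
  case (add_outer B c r)
  have A_carrier: "A \<in> carrier_mat n n" using A by (rule Pos_carrier)
  have "mtrace (A * (B + rsmult r (outer n c))) = mtrace (A * B) + complex_of_real r * qform n A c"
    unfolding rsmult_def
    by (simp add: mtrace_mult_add_right[OF A_carrier] mtrace_mult_smult_right[OF A_carrier]
        Pos_carrier[OF add_outer(1)] mtrace_mult_outer[OF A_carrier])
  with add_outer Pos_qform_nonneg[OF A, of c] show ?case by simp
qed

section \<open>Additive functionals on the positive cone\<close>

definition cone_linear :: "nat \<Rightarrow> (complex mat \<Rightarrow> real) \<Rightarrow> bool" where
  "cone_linear n h \<longleftrightarrow> (\<forall>A\<in>Pos n. \<forall>B\<in>Pos n. h (A + B) = h A + h B)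
     \<and> (\<forall>r\<ge>0. \<forall>A\<in>Pos n. h (rsmult r A) = r * h A)"

lemma cone_linearD:
  assumes "cone_linear n h"
  shows "A \<in> Pos n \<Longrightarrow> B \<in> Pos n \<Longrightarrow> h (A + B) = h A + h B"
    and "0 \<le> r \<Longrightarrow> A \<in> Pos n \<Longrightarrow> h (rsmult r A) = r * h A"
  using assms unfolding cone_linear_def by blast+

lemma cone_linear_zero: "cone_linear n h \<Longrightarrow> h (0\<^sub>m n n) = 0"
  using cone_linearD(1)[of n h "0\<^sub>m n n" "0\<^sub>m n n"] zero_in_Pos by simp

lemma Pos_dual_iff:
  "f \<in> Pos_dual n \<longleftrightarrow>
    (\<forall>A\<in>Pos n. 0 \<le> f A) \<and> cone_linear n f \<and> (\<forall>A. A \<notin> Pos n \<longrightarrow> f A = 0)"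
  unfolding Pos_dual_def cone_linear_def by blast

definition lincomb :: "nat \<Rightarrow> 'l set \<Rightarrow> ('l \<Rightarrow> real) \<Rightarrow> ('l \<Rightarrow> complex mat) \<Rightarrow> complex mat" where
  "lincomb n L a M = mat n n (\<lambda>(p,q). \<Sum>l\<in>L. complex_of_real (a l) * M l $$ (p,q))"

lemma nonneg_lincomb_in_Pos:
  assumes L: "finite L" and a: "\<And>l. l \<in> L \<Longrightarrow> 0 \<le> a l" and M: "\<And>l. l \<in> L \<Longrightarrow> M l \<in> Pos n"
    and h: "cone_linear n h"
  shows "lincomb n L a M \<in> Pos n \<and> h (lincomb n L a M) = (\<Sum>l\<in>L. a l * h (M l))"
  using L a M
proof (induction L rule: finite_induct)
  case empty
  have "lincomb n {} a M = 0\<^sub>m n n" unfolding lincomb_def by (intro eq_matI) auto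
  then show ?case using zero_in_Pos cone_linear_zero[OF h] by simp
next
  case (insert l L)
  then have IH: "lincomb n L a M \<in> Pos n" "h (lincomb n L a M) = (\<Sum>l\<in>L. a l * h (M l))"
    and Ml: "M l \<in> Pos n" and al: "0 \<le> a l" by auto
  have split: "lincomb n (insert l L) a M = lincomb n L a M + rsmult (a l) (M l)"
    unfolding lincomb_def rsmult_def using insert.hyps Pos_carrier[OF Ml]
    by (intro eq_matI) (auto simp: add.commute)
  have "rsmult (a l) (M l) \<in> Pos n" using rsmult_in_Pos[OF al Ml] .
  with IH Ml al insert.hyps show ?case
    unfolding split by (simp add: add_in_Pos cone_linearD[OF h] add.commute)
qed

text \<open>A real combination is the difference of two non-negative ones, which \<open>h\<close> respects.\<close>

lemma cone_linear_lincomb: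
  assumes L: "finite L" and M: "\<And>l. l \<in> L \<Longrightarrow> M l \<in> Pos n" and h: "cone_linear n h"
    and X: "X \<in> Pos n" "X = lincomb n L \<alpha> M"
  shows "h X = (\<Sum>l\<in>L. \<alpha> l * h (M l))"
proof -
  define pos where "pos l = max (\<alpha> l) 0" for l
  define neg where "neg l = max (- \<alpha> l) 0" for l
  have P: "lincomb n L pos M \<in> Pos n \<and> h (lincomb n L pos M) = (\<Sum>l\<in>L. pos l * h (M l))"
    by (rule nonneg_lincomb_in_Pos[OF L _ M h]) (simp add: pos_def)
  have N: "lincomb n L neg M \<in> Pos n \<and> h (lincomb n L neg M) = (\<Sum>l\<in>L. neg l * h (M l))"
    by (rule nonneg_lincomb_in_Pos[OF L _ M h]) (simp add: neg_def)
  have \<alpha>_split: "\<alpha> l = pos l - neg l" for l unfolding pos_def neg_def by auto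
  have "lincomb n L pos M = X + lincomb n L neg M"
    unfolding X(2) lincomb_def
    by (intro eq_matI) (auto simp: \<alpha>_split sum.distrib[symmetric] algebra_simps intro!: sum.cong)
  then have "h (lincomb n L pos M) = h X + h (lincomb n L neg M)"
    using cone_linearD(1)[OF h X(1)] N by simp
  then show ?thesis using P N by (simp add: \<alpha>_split left_diff_distrib sum_subtractf)
qed

text \<open>With \<open>P\<^sub>c = c c\<^sup>\<dagger>\<close>, a Hermitian \<open>X\<close> is \<open>\<Sum>\<^sub>i\<^sub>,\<^sub>j Re x\<^sub>i\<^sub>j / 2 \<cdot> (P\<^bsub>e\<^sub>i+e\<^sub>j\<^esub> - P\<^bsub>e\<^sub>i\<^esub> - P\<^bsub>e\<^sub>j\<^esub>)
  + Im x\<^sub>i\<^sub>j / 2 \<cdot> (P\<^bsub>e\<^sub>i\<^esub> + P\<^bsub>e\<^sub>j\<^esub> - P\<^bsub>e\<^sub>i+\<i>e\<^sub>j\<^esub>)\<close>; the last index selects one of the four terms.\<close>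

definition polarization_index :: "nat \<Rightarrow> (nat \<times> nat \<times> nat) set" where
  "polarization_index n = {..<n} \<times> {..<n} \<times> {..<4}"

definition polarization_proj :: "nat \<Rightarrow> nat \<times> nat \<times> nat \<Rightarrow> complex mat" where
  "polarization_proj n = (\<lambda>(i,j,t). if t = 0 then outer n (uvec i j) else if t = 1 then outer n (evec i)
      else if t = 2 then outer n (evec j) else outer n (vvec i j))"

definition polarization_coeff :: "complex mat \<Rightarrow> nat \<times> nat \<times> nat \<Rightarrow> real" where
  "polarization_coeff X = (\<lambda>(i,j,t). if t = 0 then Re (X $$ (i,j)) / 2
      else if t = 3 then - Im (X $$ (i,j)) / 2 else (Im (X $$ (i,j)) - Re (X $$ (i,j))) / 2)"

lemma polarization_proj_in_Pos: "polarization_proj n l \<in> Pos n"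
  unfolding polarization_proj_def by (auto simp: outer_in_Pos split: prod.splits)

lemma sum_polarization_index:
  "(\<Sum>l\<in>polarization_index n. g l) = (\<Sum>i<n. \<Sum>j<n. g (i,j,0) + g (i,j,1) + g (i,j,2) + g (i,j,3))"
proof -
  have "{..<4::nat} = {0,1,2,3}" by auto
  then have "(\<Sum>i<n. \<Sum>j<n. \<Sum>t\<in>{0,1,2,3::nat}. g (i,j,t)) = sum g (polarization_index n)"
    unfolding polarization_index_def sum.cartesian_product by (simp add: case_prod_beta')
  then show ?thesis by (simp add: algebra_simps)
qed

lemma polarization_terms_index:
  assumes "p < n" "q < n"
  shows "(\<Sum>t\<in>{0,1,2,3::nat}. complex_of_real (polarization_coeff X (i,j,t))
            * polarization_proj n (i,j,t) $$ (p,q))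
    = (if i = p then (if j = q then complex_of_real (Re (X $$ (i,j))) / 2
          + \<i> * complex_of_real (Im (X $$ (i,j))) / 2 else 0) else 0)
    + (if i = q then (if j = p then complex_of_real (Re (X $$ (i,j))) / 2
          - \<i> * complex_of_real (Im (X $$ (i,j))) / 2 else 0) else 0)"
  using assms
  by (auto simp: polarization_coeff_def polarization_proj_def evec_def uvec_def vvec_def
      complex_eq_iff algebra_simps) (simp_all add: field_simps)

lemma hermitian_eq_polarization_lincomb:
  assumes X: "X \<in> carrier_mat n n" "hermitian n X"
  shows "X = lincomb n (polarization_index n) (polarization_coeff X) (polarization_proj n)"
    (is "X = ?L")
proof (rule eq_matI)
  show "dim_row X = dim_row ?L" "dim_col X = dim_col ?L"
    using X by (auto simp: lincomb_def)
  fix p q assume "p < dim_row ?L" "q < dim_col ?L"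
  then have p: "p < n" and q: "q < n" by (auto simp: lincomb_def)
  have "?L $$ (p,q) = (\<Sum>l\<in>polarization_index n.
      complex_of_real (polarization_coeff X l) * polarization_proj n l $$ (p,q))"
    using p q by (simp add: lincomb_def)
  also have "\<dots> = (\<Sum>i<n. \<Sum>j<n. \<Sum>t\<in>{0,1,2,3::nat}.
      complex_of_real (polarization_coeff X (i,j,t)) * polarization_proj n (i,j,t) $$ (p,q))"
    unfolding sum_polarization_index by (simp add: algebra_simps)
  also have "\<dots> = (\<Sum>i<n. \<Sum>j<n.
      (if i = p then (if j = q then complex_of_real (Re (X $$ (i,j))) / 2
          + \<i> * complex_of_real (Im (X $$ (i,j))) / 2 else 0) else 0)
    + (if i = q then (if j = p then complex_of_real (Re (X $$ (i,j))) / 2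
          - \<i> * complex_of_real (Im (X $$ (i,j))) / 2 else 0) else 0))"
    by (intro sum.cong refl) (rule polarization_terms_index[OF p q])
  also have "\<dots> = (complex_of_real (Re (X $$ (p,q))) / 2 + \<i> * complex_of_real (Im (X $$ (p,q))) / 2)
     + (complex_of_real (Re (X $$ (q,p))) / 2 - \<i> * complex_of_real (Im (X $$ (q,p))) / 2)"
    using p q by (simp add: sum.distrib sum_if_const_cond)
  also have "\<dots> = X $$ (p,q)"
    using hermitianD[OF X(2) p q] by (simp add: complex_eq_iff)
  finally show "X $$ (p,q) = ?L $$ (p,q)" by simp
qed

lemma cone_linear_eq_on_Pos:
  assumes h1: "cone_linear n h1" and h2: "cone_linear n h2"
    and uvec: "\<And>i j. i < n \<Longrightarrow> j < n \<Longrightarrow> h1 (outer n (uvec i j)) = h2 (outer n (uvec i j))"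
    and vvec: "\<And>i j. i < n \<Longrightarrow> j < n \<Longrightarrow> h1 (outer n (vvec i j)) = h2 (outer n (vvec i j))"
    and evec: "\<And>i. i < n \<Longrightarrow> h1 (outer n (evec i)) = h2 (outer n (evec i))"
    and X: "X \<in> Pos n"
  shows "h1 X = h2 X"
proof -
  note X_eq = hermitian_eq_polarization_lincomb[OF Pos_carrier[OF X] Pos_hermitian[OF X]]
  have finite: "finite (polarization_index n)" by (simp add: polarization_index_def)
  have "h1 (polarization_proj n l) = h2 (polarization_proj n l)" if "l \<in> polarization_index n" for l
    using that uvec vvec evec
    unfolding polarization_index_def polarization_proj_def by (auto split: prod.splits)
  then show ?thesis
    using cone_linear_lincomb[OF finite polarization_proj_in_Pos h1 X X_eq]
      cone_linear_lincomb[OF finite polarization_proj_in_Pos h2 X X_eq] by simp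
qed

lemma cone_linear_mtrace: "A \<in> carrier_mat n n \<Longrightarrow> cone_linear n (\<lambda>X. Re (mtrace (A * X)))"
  unfolding cone_linear_def rsmult_def
  by (auto simp: mtrace_mult_add_right mtrace_mult_smult_right Pos_carrier)

text \<open>The entries are chosen by inverting the polarization identities for \<open>qform\<close> at
  \<open>e\<^sub>i + e\<^sub>j\<close> and \<open>e\<^sub>i + \<i> e\<^sub>j\<close>, so that \<open>Re \<langle>A c, c\<rangle> = f (c c\<^sup>\<dagger>)\<close> for these vectors and for \<open>e\<^sub>i\<close>.\<close>

definition dual_mat :: "nat \<Rightarrow> (complex mat \<Rightarrow> real) \<Rightarrow> complex mat" where
  "dual_mat n f = mat n n (\<lambda>(i,j).
     Complex ((f (outer n (uvec i j)) - f (outer n (evec i)) - f (outer n (evec j))) / 2)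
             ((f (outer n (evec i)) + f (outer n (evec j)) - f (outer n (vvec i j))) / 2))"

lemma outer_uvec_diag: "outer n (uvec i i) = rsmult 4 (outer n (evec i))"
  by (intro eq_matI) (auto simp: uvec_def evec_def rsmult_def)

lemma outer_vvec_add_swap:
  "outer n (vvec i j) + outer n (vvec j i) = rsmult 2 (outer n (evec i)) + rsmult 2 (outer n (evec j))"
  by (intro eq_matI) (auto simp: vvec_def evec_def rsmult_def algebra_simps)

lemma uvec_commute: "uvec j i = uvec i j"
  by (auto simp: uvec_def)

lemma cone_linear_outer_uvec_diag:
  "cone_linear n f \<Longrightarrow> f (outer n (uvec i i)) = 4 * f (outer n (evec i))"
  unfolding outer_uvec_diag by (simp add: cone_linearD outer_in_Pos)

lemma cone_linear_outer_vvec_swap: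
  assumes f: "cone_linear n f"
  shows "f (outer n (vvec i j)) + f (outer n (vvec j i))
    = 2 * f (outer n (evec i)) + 2 * f (outer n (evec j))"
  using arg_cong[OF outer_vvec_add_swap[of n i j], of f]
  by (simp add: cone_linearD[OF f] outer_in_Pos rsmult_in_Pos)

lemma dual_mat_hermitian:
  assumes f: "cone_linear n f"
  shows "hermitian n (dual_mat n f)"
  unfolding hermitian_def
proof (intro allI impI)
  fix i j assume "i < n" "j < n"
  then show "dual_mat n f $$ (j,i) = cnj (dual_mat n f $$ (i,j))"
    using uvec_commute[of i j] cone_linear_outer_vvec_swap[OF f, of i j]
    by (simp add: dual_mat_def complex_eq_iff field_simps)
qed

lemma cone_linear_eq_mtrace_dual_mat:
  assumes f: "cone_linear n f" and X: "X \<in> Pos n"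
  shows "f X = Re (mtrace (dual_mat n f * X))"
proof -
  have A: "dual_mat n f \<in> carrier_mat n n" by (simp add: dual_mat_def)
  have entry: "dual_mat n f $$ (i,j) = Complex
      ((f (outer n (uvec i j)) - f (outer n (evec i)) - f (outer n (evec j))) / 2)
      ((f (outer n (evec i)) + f (outer n (evec j)) - f (outer n (vvec i j))) / 2)"
    if "i < n" "j < n" for i j using that by (simp add: dual_mat_def)
  note diag = cone_linear_outer_uvec_diag[OF f]
  show ?thesis
  proof (rule cone_linear_eq_on_Pos[OF f cone_linear_mtrace[OF A] _ _ _ X])
    fix i j assume i: "i < n" and j: "j < n"
    show "f (outer n (uvec i j)) = Re (mtrace (dual_mat n f * outer n (uvec i j)))"
      unfolding mtrace_mult_outer[OF A] qform_uvec[OF i j]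
      using entry[OF i i] entry[OF j j] entry[OF i j] entry[OF j i] diag[of i] diag[of j]
        uvec_commute[of i j] by (simp add: field_simps)
  next
    fix i j assume i: "i < n" and j: "j < n"
    show "f (outer n (vvec i j)) = Re (mtrace (dual_mat n f * outer n (vvec i j)))"
      unfolding mtrace_mult_outer[OF A] qform_vvec[OF i j]
      using entry[OF i i] entry[OF j j] entry[OF i j] entry[OF j i] diag[of i] diag[of j]
        cone_linear_outer_vvec_swap[OF f, of i j] by (simp add: field_simps)
  next
    fix i assume i: "i < n"
    show "f (outer n (evec i)) = Re (mtrace (dual_mat n f * outer n (evec i)))"
      unfolding mtrace_mult_outer[OF A] qform_evec[OF i] using entry[OF i i] diag[of i] by simp
  qed
qed

section \<open>The trace pairing\<close>

lemma mtrace_Pos_eq_hs: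
  assumes A: "A \<in> Pos n" and B: "B \<in> Pos n"
  shows "mtrace (A * B) = complex_of_real (hs n A B)"
  using hermitian_mtrace_mult_real[OF Pos_carrier[OF A] Pos_hermitian[OF A]
      Pos_carrier[OF B] Pos_hermitian[OF B]] B
  by (simp add: hs_def complex_eq_iff)

lemma hs_outer: "A \<in> Pos n \<Longrightarrow> hs n A (outer n c) = Re (qform n A c)"
  by (simp add: hs_def outer_in_Pos mtrace_mult_outer Pos_carrier)

lemma hs_in_Pos_dual:
  assumes A: "A \<in> Pos n"
  shows "hs n A \<in> Pos_dual n"
proof -
  have "cone_linear n (hs n A)"
    using cone_linear_mtrace[OF Pos_carrier[OF A]]
    unfolding cone_linear_def hs_def by (simp add: add_in_Pos rsmult_in_Pos)
  then show ?thesis unfolding Pos_dual_iff hs_def using mtrace_Pos_nonneg[OF A] by simp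
qed

lemma hs_add:
  assumes A: "A \<in> Pos n" and B: "B \<in> Pos n"
  shows "hs n (A + B) = (\<lambda>X. hs n A X + hs n B X)"
proof
  fix X
  have Ac: "A \<in> carrier_mat n n" and Bc: "B \<in> carrier_mat n n" using A B by (auto intro: Pos_carrier)
  show "hs n (A + B) X = hs n A X + hs n B X"
  proof (cases "X \<in> Pos n")
    case True
    then have Xc: "X \<in> carrier_mat n n" by (rule Pos_carrier)
    have "mtrace ((A + B) * X) = mtrace (X * (A + B))"
      using Ac Bc Xc by (intro mtrace_mult_comm) auto
    also have "\<dots> = mtrace (A * X) + mtrace (B * X)"
      using mtrace_mult_add_right[OF Xc Ac Bc] mtrace_mult_comm[OF Ac Xc] mtrace_mult_comm[OF Bc Xc]
      by simp
    finally show ?thesis using True by (simp add: hs_def)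
  qed (simp add: hs_def)
qed

lemma hs_rsmult:
  assumes A: "A \<in> Pos n"
  shows "hs n (rsmult r A) = (\<lambda>X. r * hs n A X)"
proof
  fix X
  have Ac: "A \<in> carrier_mat n n" using A by (rule Pos_carrier)
  show "hs n (rsmult r A) X = r * hs n A X"
  proof (cases "X \<in> Pos n")
    case True
    then have Xc: "X \<in> carrier_mat n n" by (rule Pos_carrier)
    have "mtrace (rsmult r A * X) = mtrace (X * rsmult r A)"
      using Ac Xc by (intro mtrace_mult_comm) (auto simp: rsmult_def)
    also have "\<dots> = complex_of_real r * mtrace (A * X)"
      using mtrace_mult_smult_right[OF Xc Ac] mtrace_mult_comm[OF Ac Xc] by (simp add: rsmult_def)
    finally show ?thesis using True by (simp add: hs_def)
  qed (simp add: hs_def)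
qed

lemma inj_on_hs: "inj_on (hs n) (Pos n)"
proof (rule inj_onI)
  fix A B assume A: "A \<in> Pos n" and B: "B \<in> Pos n" and eq: "hs n A = hs n B"
  show "A = B"
  proof (rule mat_eq_if_qform_eq[OF Pos_carrier[OF A] Pos_carrier[OF B]])
    fix c
    have "Re (qform n A c) = Re (qform n B c)" using hs_outer[OF A, of c] hs_outer[OF B, of c] eq by simp
    with Pos_qform_real[OF A] Pos_qform_real[OF B] show "qform n A c = qform n B c"
      by (simp add: complex_eq_iff)
  qed
qed

lemma dual_mat_in_Pos:
  assumes "f \<in> Pos_dual n"
  shows "dual_mat n f \<in> Pos n"
  unfolding Pos_iff_qform
proof (intro conjI allI)
  have f: "cone_linear n f" using assms by (simp add: Pos_dual_iff)
  show A: "dual_mat n f \<in> carrier_mat n n" by (simp add: dual_mat_def)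
  fix x
  show "Im (qform n (dual_mat n f) x) = 0" by (rule hermitian_qform_real[OF dual_mat_hermitian[OF f]])
  have "Re (qform n (dual_mat n f) x) = f (outer n x)"
    using cone_linear_eq_mtrace_dual_mat[OF f outer_in_Pos] by (simp add: mtrace_mult_outer[OF A])
  with assms outer_in_Pos show "0 \<le> Re (qform n (dual_mat n f) x)" by (simp add: Pos_dual_iff)
qed

lemma hs_dual_mat:
  assumes "f \<in> Pos_dual n"
  shows "hs n (dual_mat n f) = f"
proof
  fix X
  have f: "cone_linear n f" using assms by (simp add: Pos_dual_iff)
  show "hs n (dual_mat n f) X = f X"
    using assms cone_linear_eq_mtrace_dual_mat[OF f, of X]
    by (cases "X \<in> Pos n") (simp_all add: hs_def Pos_dual_iff)
qed

lemma bij_betw_hs: "bij_betw (hs n) (Pos n) (Pos_dual n)"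
  unfolding bij_betw_def
proof (intro conjI inj_on_hs equalityI subsetI)
  fix f assume "f \<in> hs n ` Pos n"
  then show "f \<in> Pos_dual n" using hs_in_Pos_dual by auto
next
  fix f assume "f \<in> Pos_dual n"
  then show "f \<in> hs n ` Pos n" using dual_mat_in_Pos hs_dual_mat by (metis image_eqI)
qed

section \<open>Functoriality and naturality\<close>

lemma mat_adjoint_carrier: "C \<in> carrier_mat m n \<Longrightarrow> mat_adjoint C \<in> carrier_mat n m"
  unfolding mat_adjoint_def by auto

lemma mat_adjoint_index:
  "(C :: complex mat) \<in> carrier_mat m n \<Longrightarrow> i < n \<Longrightarrow> j < m \<Longrightarrow> mat_adjoint C $$ (i,j) = cnj (C $$ (j,i))"
  unfolding mat_adjoint_def by (auto simp: mat_of_rows_index)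

lemma mat_adjoint_adjoint:
  fixes C :: "complex mat"
  assumes C: "C \<in> carrier_mat m n"
  shows "mat_adjoint (mat_adjoint C) = C"
  using C mat_adjoint_carrier[OF C] mat_adjoint_carrier[OF mat_adjoint_carrier[OF C]]
  by (intro eq_matI) (auto simp: mat_adjoint_index[OF mat_adjoint_carrier[OF C]] mat_adjoint_index[OF C])

lemma mat_adjoint_mult:
  fixes C D :: "complex mat"
  assumes C: "C \<in> carrier_mat m n" and D: "D \<in> carrier_mat n k"
  shows "mat_adjoint (C * D) = mat_adjoint D * mat_adjoint C"
proof -
  have CD: "C * D \<in> carrier_mat m k" using C D by simp
  note carriers = mat_adjoint_carrier[OF CD] mat_adjoint_carrier[OF C] mat_adjoint_carrier[OF D]
  show ?thesis
  proof (rule eq_matI)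
    show "dim_row (mat_adjoint (C * D)) = dim_row (mat_adjoint D * mat_adjoint C)"
      "dim_col (mat_adjoint (C * D)) = dim_col (mat_adjoint D * mat_adjoint C)"
      using carriers by auto
    fix i j assume "i < dim_row (mat_adjoint D * mat_adjoint C)" "j < dim_col (mat_adjoint D * mat_adjoint C)"
    then have i: "i < k" and j: "j < m" using carriers by auto
    show "mat_adjoint (C * D) $$ (i, j) = (mat_adjoint D * mat_adjoint C) $$ (i, j)"
      using i j C D carriers
      by (auto simp: mat_adjoint_index[OF CD] mat_adjoint_index[OF C] mat_adjoint_index[OF D]
          scalar_prod_def cnj_sum mult.commute intro!: sum.cong)
  qed
qed

lemma mat_adjoint_one: "mat_adjoint (1\<^sub>m n :: complex mat) = 1\<^sub>m n"
  using mat_adjoint_carrier[of "1\<^sub>m n" n n]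
  by (intro eq_matI) (auto simp: mat_adjoint_index[of "1\<^sub>m n" n n])

lemma hinner_mat_adjoint:
  assumes C: "C \<in> carrier_mat m n" and u: "u \<in> carrier_vec n" and x: "x \<in> carrier_vec m"
  shows "hinner (C *\<^sub>v u) x = hinner u (mat_adjoint C *\<^sub>v x)"
proof -
  have "hinner (C *\<^sub>v u) x = (\<Sum>p<m. (\<Sum>a<n. C $$ (p,a) * u $ a) * cnj (x $ p))"
    unfolding hinner_def using C u x by (auto simp: scalar_prod_def atLeast0LessThan intro!: sum.cong)
  also have "\<dots> = (\<Sum>p<m. \<Sum>a<n. u $ a * (C $$ (p,a) * cnj (x $ p)))"
    by (simp add: sum_distrib_left sum_distrib_right mult_ac)
  also have "\<dots> = (\<Sum>a<n. \<Sum>p<m. u $ a * (C $$ (p,a) * cnj (x $ p)))" by (rule sum.swap)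
  also have "\<dots> = (\<Sum>a<n. u $ a * cnj (\<Sum>p<m. cnj (C $$ (p,a)) * x $ p))"
    by (simp add: sum_distrib_left cnj_sum)
  also have "\<dots> = hinner u (mat_adjoint C *\<^sub>v x)"
    unfolding hinner_def using C u x mat_adjoint_carrier[OF C]
    by (auto simp: scalar_prod_def atLeast0LessThan mat_adjoint_index[OF C] intro!: sum.cong)
  finally show ?thesis .
qed

lemma PosMap_in_Pos:
  assumes C: "C \<in> carrier_mat m n" and A: "A \<in> Pos n"
  shows "PosMap C A \<in> Pos m"
  unfolding Pos_def PosMap_def
proof (intro CollectI conjI ballI)
  have Ac: "A \<in> carrier_mat n n" using A by (rule Pos_carrier)
  have Cd: "mat_adjoint C \<in> carrier_mat n m" by (rule mat_adjoint_carrier[OF C])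
  show "C * A * mat_adjoint C \<in> carrier_mat m m" using C Ac Cd by auto
  fix x :: "complex vec" assume x: "x \<in> carrier_vec m"
  define y where "y = mat_adjoint C *\<^sub>v x"
  have y: "y \<in> carrier_vec n" unfolding y_def using Cd x by simp
  have "(C * A * mat_adjoint C) *\<^sub>v x = C *\<^sub>v (A *\<^sub>v y)"
    unfolding y_def using C Ac Cd x by (simp add: assoc_mult_mat_vec[of _ m n _ m])
  then have eq: "hinner ((C * A * mat_adjoint C) *\<^sub>v x) x = hinner (A *\<^sub>v y) y"
    using hinner_mat_adjoint[OF C _ x, of "A *\<^sub>v y"] Ac y unfolding y_def by simp
  from A y have "Im (hinner (A *\<^sub>v y) y) = 0 \<and> 0 \<le> Re (hinner (A *\<^sub>v y) y)"
    unfolding Pos_def by blast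
  then show "Im (hinner ((C * A * mat_adjoint C) *\<^sub>v x) x) = 0"
    and "0 \<le> Re (hinner ((C * A * mat_adjoint C) *\<^sub>v x) x)" unfolding eq by auto
qed

lemma PosMap_add:
  assumes C: "C \<in> carrier_mat m n" and A: "A \<in> carrier_mat n n" and B: "B \<in> carrier_mat n n"
  shows "PosMap C (A + B) = PosMap C A + PosMap C B"
  unfolding PosMap_def
  using C A B mat_adjoint_carrier[OF C]
  by (simp add: mult_add_distrib_mat add_mult_distrib_mat[of _ m n])

lemma PosMap_rsmult:
  assumes C: "C \<in> carrier_mat m n" and A: "A \<in> carrier_mat n n"
  shows "PosMap C (rsmult r A) = rsmult r (PosMap C A)"
  unfolding PosMap_def rsmult_def
  using C A mat_adjoint_carrier[OF C]
  by (simp add: mult_smult_distrib mult_smult_assoc_mat[of _ m n])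

lemma PosMap_mult:
  assumes C: "C \<in> carrier_mat m n" and D: "D \<in> carrier_mat n k" and A: "A \<in> carrier_mat k k"
  shows "PosMap (C * D) A = PosMap C (PosMap D A)"
proof -
  have Cd: "mat_adjoint C \<in> carrier_mat n m" by (rule mat_adjoint_carrier[OF C])
  have Dd: "mat_adjoint D \<in> carrier_mat k n" by (rule mat_adjoint_carrier[OF D])
  have "C * D * A * (mat_adjoint D * mat_adjoint C) = C * (D * A * mat_adjoint D) * mat_adjoint C"
    using C D A Cd Dd by (simp add: assoc_mult_mat[of _ m n _ k _ m] assoc_mult_mat[of _ m k _ k _ m]
        assoc_mult_mat[of _ m n _ n _ m] assoc_mult_mat[of _ n k _ n _ m] assoc_mult_mat[of _ n k _ k _ m])
  then show ?thesis unfolding PosMap_def mat_adjoint_mult[OF C D] .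
qed

lemma PosMap_one: "A \<in> carrier_mat n n \<Longrightarrow> PosMap (1\<^sub>m n) A = A"
  unfolding PosMap_def mat_adjoint_one by simp

lemma dualmap_PosMap_hs:
  assumes C: "C \<in> carrier_mat m n" and A: "A \<in> Pos m"
  shows "dualmap n (PosMap C) (hs m A) = hs n (PosMap (mat_adjoint C) A)"
proof
  fix B
  have Ac: "A \<in> carrier_mat m m" using A by (rule Pos_carrier)
  have Cd: "mat_adjoint C \<in> carrier_mat n m" by (rule mat_adjoint_carrier[OF C])
  show "dualmap n (PosMap C) (hs m A) B = hs n (PosMap (mat_adjoint C) A) B"
  proof (cases "B \<in> Pos n")
    case True
    have Bc: "B \<in> carrier_mat n n" using True by (rule Pos_carrier)
    have "mtrace (A * (C * B * mat_adjoint C)) = mtrace ((A * C * B) * mat_adjoint C)"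
      using Ac C Bc Cd by (simp add: assoc_mult_mat[of _ m m _ n _ m] assoc_mult_mat[of _ m n _ n _ m])
    also have "\<dots> = mtrace (mat_adjoint C * (A * C * B))"
      using Ac C Bc Cd by (intro mtrace_mult_comm[of _ m n]) auto
    also have "\<dots> = mtrace (mat_adjoint C * A * C * B)"
      using Ac C Bc Cd by (simp add: assoc_mult_mat[of _ n m _ m _ n] assoc_mult_mat[of _ n m _ n _ n]
          assoc_mult_mat[of _ m m _ n _ n])
    finally show ?thesis
      using True PosMap_in_Pos[OF C True]
      unfolding dualmap_def hs_def PosMap_def mat_adjoint_adjoint[OF C] by simp
  qed (simp add: dualmap_def hs_def)
qed

lemma dualmap_hs_ev:
  assumes A: "A \<in> Pos n"
  shows "dualmap n (hs n) (ev n A) = hs n A"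
proof
  fix B
  show "dualmap n (hs n) (ev n A) B = hs n A B"
  proof (cases "B \<in> Pos n")
    case True
    then have "dualmap n (hs n) (ev n A) B = hs n B A"
      using hs_in_Pos_dual[OF True] by (simp add: dualmap_def ev_def)
    also have "\<dots> = hs n A B"
      using A True mtrace_mult_comm[OF Pos_carrier[OF True] Pos_carrier[OF A]] by (simp add: hs_def)
    finally show ?thesis .
  qed (simp add: dualmap_def hs_def)
qed

theorem proposition2p3:
  fixes n m k :: nat and C D :: "complex mat"
  assumes C: "C \<in> carrier_mat m n" and D: "D \<in> carrier_mat n k"
  shows
    \<comment> \<open>Pos(n) is an R>=0-module (submodule of the matrices)\<close>
    "0\<^sub>m n n \<in> Pos n
     \<and> (\<forall>A \<in> Pos n. \<forall>B \<in> Pos n. A + B \<in> Pos n)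
     \<and> (\<forall>r \<ge> 0. \<forall>A \<in> Pos n. rsmult r A \<in> Pos n)
    \<comment> \<open>hs is well defined: tr(AB) is a non-negative real and hs A is linear\<close>
     \<and> (\<forall>A \<in> Pos n. \<forall>B \<in> Pos n. mtrace (A * B) = complex_of_real (hs n A B))
     \<and> (\<forall>A \<in> Pos n. hs n A \<in> Pos_dual n)
    \<comment> \<open>hs is a morphism of R>=0-modules\<close>
     \<and> (\<forall>A \<in> Pos n. \<forall>B \<in> Pos n. hs n (A + B) = (\<lambda>X. hs n A X + hs n B X))
     \<and> (\<forall>r \<ge> 0. \<forall>A \<in> Pos n. hs n (rsmult r A) = (\<lambda>X. r * hs n A X))
    \<comment> \<open>hs is an isomorphism\<close>
     \<and> bij_betw (hs n) (Pos n) (Pos_dual n)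
    \<comment> \<open>Pos is a functor FdHilb -> Mod_R>=0\<close>
     \<and> (\<forall>A \<in> Pos n. PosMap C A \<in> Pos m)
     \<and> (\<forall>A \<in> Pos n. \<forall>B \<in> Pos n. PosMap C (A + B) = PosMap C A + PosMap C B)
     \<and> (\<forall>r \<ge> 0. \<forall>A \<in> Pos n. PosMap C (rsmult r A) = rsmult r (PosMap C A))
     \<and> (\<forall>A \<in> Pos k. PosMap (C * D) A = PosMap C (PosMap D A))
     \<and> (\<forall>A \<in> Pos n. PosMap (1\<^sub>m n) A = A)
    \<comment> \<open>naturality: Pos(C)^* o hs_K = hs_H o Pos(C^dagger)\<close>
     \<and> (\<forall>A \<in> Pos m. dualmap n (PosMap C) (hs m A) = hs n (PosMap (mat_adjoint C) A))
    \<comment> \<open>compatibility with the units (map of adjunctions): hs^* o ev = hs o id\<close>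
     \<and> (\<forall>A \<in> Pos n. dualmap n (hs n) (ev n A) = hs n A)"
proof (intro conjI ballI allI impI)
  fix A B assume "A \<in> Pos n" "B \<in> Pos n"
  then show "A + B \<in> Pos n" "mtrace (A * B) = complex_of_real (hs n A B)"
    "hs n (A + B) = (\<lambda>X. hs n A X + hs n B X)" "PosMap C (A + B) = PosMap C A + PosMap C B"
    by (simp_all add: add_in_Pos mtrace_Pos_eq_hs hs_add PosMap_add[OF C] Pos_carrier)
next
  fix r :: real and A assume "0 \<le> r" "A \<in> Pos n"
  then show "rsmult r A \<in> Pos n" "hs n (rsmult r A) = (\<lambda>X. r * hs n A X)"
    "PosMap C (rsmult r A) = rsmult r (PosMap C A)"
    by (simp_all add: rsmult_in_Pos hs_rsmult PosMap_rsmult[OF C] Pos_carrier)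
next
  fix A assume "A \<in> Pos n"
  then show "hs n A \<in> Pos_dual n" "PosMap C A \<in> Pos m" "PosMap (1\<^sub>m n) A = A"
    "dualmap n (hs n) (ev n A) = hs n A"
    by (simp_all add: hs_in_Pos_dual PosMap_in_Pos[OF C] PosMap_one Pos_carrier dualmap_hs_ev)
next
  fix A assume "A \<in> Pos k"
  then show "PosMap (C * D) A = PosMap C (PosMap D A)" by (simp add: PosMap_mult[OF C D] Pos_carrier)
next
  fix A assume "A \<in> Pos m"
  then show "dualmap n (PosMap C) (hs m A) = hs n (PosMap (mat_adjoint C) A)"
    by (rule dualmap_PosMap_hs[OF C])
qed (simp_all add: zero_in_Pos bij_betw_hs)

end
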